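(* Let $\mathcal{A}$ be a central hyperplane arrangement in $V=\mathbb{K}^3$. Then $\mathcal{A}$ is factored if and only if it is hereditarily factored, and $\mathcal{A}$ is inductively factored if and only if it is hereditarily inductively factored.
   Context: $\mathbb{K}$ is a field; a central arrangement is a finite set of linear hyperplanes; $\Phi_\ell$ the empty arrangement in an $\ell$-dimensional space. $L(\mathcal{A})$ is the set of intersections of subsets of $\mathcal{A}$ ($V$ included); $\mathcal{A}_X=\{H\in\mathcal{A}\mid X\subseteq H\}$, $\mathcal{A}^X=\{X\cap H\mid H\in\mathcal{A}\setminus\mathcal{A}_X\}$. A partition $\pi=(\pi_1,\ldots,\pi_s)$ of $\mathcal{A}$ is nice if it is independent (for all choices $H_i\in\pi_i$, $\operatorname{codim}(H_1\cap\cdots\cap H_s)=s$) and for each $X\in L(\mathcal{A})\setminus\{V\}$ some non-empty $\pi_i\cap\mathcal{A}_X$ is a singleton; $\mathcal{A}$ is factored if it has a nice partition (the empty partition is nice for an empty arrangement). For $H_0\in\pi_1$: $\mathcal{A}'=\mathcal{A}\setminus\{H_0\}$, $\mathcal{A}''=\mathcal{A}^{H_0}$, $\pi'$ the partition of $\mathcal{A}'$ by the non-empty $\pi_i\cap\mathcal{A}'$, $\mathrm{R}:\mathcal{A}\setminus\pi_1\to\mathcal{A}''$, $H\mapsto H\cap H_0$, $\pi''=(\mathrm{R}(\pi_2),\ldots,\mathrm{R}(\pi_s))$. The class of inductively factored pairs is the smallest class of pairs $(\mathcal{A},\pi)$ containing $(\Phi_\ell,\text{empty partition})$ for all $\ell$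 and containing $(\mathcal{A},\pi)$ whenever there is $H_0\in\pi_1$ with $\mathrm{R}$ bijective and $(\mathcal{A}',\pi')$, $(\mathcal{A}'',\pi'')$ in the class; $\mathcal{A}$ is inductively factored if some $(\mathcal{A},\pi)$ is in it. $\mathcal{A}$ is hereditarily (inductively) factored if $\mathcal{A}^X$ is (inductively) factored for every $X\in L(\mathcal{A})$. *)

theory Defs
  imports "HOL-Analysis.Analysis"
begin

text \<open>An arrangement is a pair (W, A): an ambient linear subspace W of K^n and a
 finite set A of linear hyperplanes of W (subspaces of W of codimension 1 in W).
 This makes restrictions A^X (arrangements in X) expressible.\<close>

definition hyperplane_in :: "('a::field ^ 'n) set \<Rightarrow> ('a ^ 'n) set \<Rightarrow> bool" where
  "hyperplane_in W H \<longleftrightarrow> vec.subspace H \<and> H \<subseteq> W \<and> vec.dim H + 1 = vec.dim W"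

definition arrangement :: "('a::field ^ 'n) set \<Rightarrow> ('a ^ 'n) set set \<Rightarrow> bool" where
  "arrangement W A \<longleftrightarrow> vec.subspace W \<and> finite A \<and> (\<forall>H\<in>A. hyperplane_in W H)"

definition codim_in :: "('a::field ^ 'n) set \<Rightarrow> ('a ^ 'n) set \<Rightarrow> nat" where
  "codim_in W X = vec.dim W - vec.dim X"

definition intersection_lattice :: "'v set \<Rightarrow> 'v set set \<Rightarrow> 'v set set" where
  "intersection_lattice W A = {W \<inter> \<Inter>B | B. B \<subseteq> A}"

definition localization :: "'v set set \<Rightarrow> 'v set \<Rightarrow> 'v set set" where
  "localization A X = {H \<in> A. X \<subseteq> H}"

definition restriction :: "'v set set \<Rightarrow> 'v set \<Rightarrow> 'v set set" where
  "restriction A X = {X \<inter> H | H. H \<in> A - localization A X}"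

definition is_partition :: "'v set set \<Rightarrow> 'v set set list \<Rightarrow> bool" where
  "is_partition A \<pi> \<longleftrightarrow> (\<forall>b\<in>set \<pi>. b \<noteq> {}) \<and> \<Union>(set \<pi>) = A \<and>
     (\<forall>i<length \<pi>. \<forall>j<length \<pi>. i \<noteq> j \<longrightarrow> \<pi>!i \<inter> \<pi>!j = {})"

definition independent_partition :: "('a::field ^ 'n) set \<Rightarrow> ('a ^ 'n) set set list \<Rightarrow> bool" where
  "independent_partition W \<pi> \<longleftrightarrow>
     (\<forall>f. (\<forall>i<length \<pi>. f i \<in> \<pi>!i) \<longrightarrow>
          codim_in W (W \<inter> \<Inter>{f i | i. i < length \<pi>}) = length \<pi>)"

definition nice_partition :: "('a::field ^ 'n) set \<Rightarrow> ('a ^ 'n) set set \<Rightarrow> ('a ^ 'n) set set list \<Rightarrow> bool" where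
  "nice_partition W A \<pi> \<longleftrightarrow> is_partition A \<pi> \<and> independent_partition W \<pi> \<and>
     (\<forall>X \<in> intersection_lattice W A - {W}.
        \<exists>i<length \<pi>. card (\<pi>!i \<inter> localization A X) = 1)"

definition factored :: "('a::field ^ 'n) set \<Rightarrow> ('a ^ 'n) set set \<Rightarrow> bool" where
  "factored W A \<longleftrightarrow> (\<exists>\<pi>. nice_partition W A \<pi>)"

text \<open>For H0 in \<pi>_1: A' = A - {H0} (in W), A'' = A^{H0} (in H0),
 \<pi>' = nonempty blocks \<pi>_i - {H0} in order, R H = H \<inter> H0 on A - \<pi>_1,
 \<pi>'' = (R(\<pi>_2), ..., R(\<pi>_s)).\<close>
inductive ind_factored_pair :: "('a::field ^ 'n) set \<Rightarrow> ('a ^ 'n) set set \<Rightarrow> ('a ^ 'n) set set list \<Rightarrow> bool" where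
  empty: "vec.subspace W \<Longrightarrow> ind_factored_pair W {} []"
| step: "\<lbrakk> arrangement W A; is_partition A \<pi>; \<pi> \<noteq> []; H0 \<in> hd \<pi>;
           bij_betw (\<lambda>H. H \<inter> H0) (A - hd \<pi>) (restriction A H0);
           ind_factored_pair W (A - {H0}) (filter (\<lambda>b. b \<noteq> {}) (map (\<lambda>b. b - {H0}) \<pi>));
           ind_factored_pair H0 (restriction A H0) (map (\<lambda>b. (\<lambda>H. H \<inter> H0) ` b) (tl \<pi>)) \<rbrakk>
        \<Longrightarrow> ind_factored_pair W A \<pi>"

definition ind_factored :: "('a::field ^ 'n) set \<Rightarrow> ('a ^ 'n) set set \<Rightarrow> bool" where
  "ind_factored W A \<longleftrightarrow> (\<exists>\<pi>. ind_factored_pair W A \<pi>)"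

definition hered_factored :: "('a::field ^ 'n) set \<Rightarrow> ('a ^ 'n) set set \<Rightarrow> bool" where
  "hered_factored W A \<longleftrightarrow> (\<forall>X \<in> intersection_lattice W A. factored X (restriction A X))"

definition hered_ind_factored :: "('a::field ^ 'n) set \<Rightarrow> ('a ^ 'n) set set \<Rightarrow> bool" where
  "hered_ind_factored W A \<longleftrightarrow> (\<forall>X \<in> intersection_lattice W A. ind_factored X (restriction A X))"

end

theory Submission
  imports Defs
begin

text \<open>Every proper flat X of a central arrangement in a 3-dimensional space is contained in a
  hyperplane, so the restriction to X is an arrangement in dimension at most 2, while the
  restriction to V itself is the arrangement. In dimension 1 the only hyperplane is 0. In
  dimension 2 two distinct lines meet only in 0, so for any L the partition
  (A - {L}, {L}) is nice, and it is inductively factored: deleting a line H0 of the first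
  block leaves a partition of the same shape, and restricting to H0 leaves the single
  hyperplane 0 of the line H0. Hence all proper restrictions are factored and inductively
  factored, and the hereditary properties reduce to the properties of A itself.\<close>

lemma hyperplane_in_subspace: "hyperplane_in W H \<Longrightarrow> vec.subspace H"
  by (simp add: hyperplane_in_def)

lemma hyperplane_in_zero:
  fixes L :: "('a::field ^ 'n) set"
  assumes "vec.subspace L" "vec.dim L = 1"
  shows "hyperplane_in L {0}"
  using assms vec.subspace_0 by (auto simp: hyperplane_in_def)

lemma hyperplane_in_eq_if_subset:
  fixes W H K :: "('a::field ^ 'n) set"
  assumes "hyperplane_in W H" "hyperplane_in W K" "H \<subseteq> K"
  shows "H = K"
  using assms vec.subspace_dim_equal[of H K] by (simp add: hyperplane_in_def)

lemma dim_Int_hyperplane_in: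
  fixes W H X :: "('a::field ^ 'n) set"
  assumes W: "vec.subspace W" and H: "hyperplane_in W H"
    and X: "vec.subspace X" "X \<subseteq> W" and X_not_in_H: "\<not> X \<subseteq> H"
  shows "vec.dim (X \<inter> H) + 1 = vec.dim X"
proof -
  define S where "S = {x + y |x y. x \<in> X \<and> y \<in> H}"
  have Hs: "vec.subspace H" "H \<subseteq> W" "vec.dim H + 1 = vec.dim W"
    using H by (auto simp: hyperplane_in_def)
  have S: "vec.subspace S"
    unfolding S_def using vec.subspace_sums[OF X(1) Hs(1)] .
  have "H \<subseteq> S"
    using X(1) vec.subspace_0 by (force simp: S_def)
  moreover have "H \<noteq> S"
  proof -
    obtain x where "x \<in> X" "x \<notin> H" using X_not_in_H by blast
    moreover have "x + 0 \<in> S"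
      unfolding S_def using \<open>x \<in> X\<close> vec.subspace_0[OF Hs(1)] by blast
    ultimately show ?thesis by auto
  qed
  ultimately have "vec.dim H < vec.dim S"
    using vec.subspace_dim_equal[OF Hs(1) S] by fastforce
  moreover have "vec.dim S \<le> vec.dim W"
    using W X Hs by (intro vec.dim_subset) (auto simp: S_def intro: vec.subspace_add)
  ultimately have "vec.dim S = vec.dim W" using Hs(3) by linarith
  then show ?thesis
    using vec.dim_sums_Int[OF X(1) Hs(1)] Hs(3) by (simp add: S_def)
qed

lemma hyperplane_in_Int_eq_zero:
  fixes W H K :: "('a::field ^ 'n) set"
  assumes W: "vec.subspace W" "vec.dim W = 2"
    and H: "hyperplane_in W H" and K: "hyperplane_in W K" and "H \<noteq> K"
  shows "H \<inter> K = {0}"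
proof -
  have "\<not> H \<subseteq> K" using hyperplane_in_eq_if_subset[OF H K] \<open>H \<noteq> K\<close> by blast
  then have "vec.dim (H \<inter> K) + 1 = vec.dim H"
    using dim_Int_hyperplane_in[OF W(1) K hyperplane_in_subspace[OF H]] H
    by (auto simp: hyperplane_in_def)
  then have "vec.dim (H \<inter> K) = 0" using H W by (auto simp: hyperplane_in_def)
  moreover have "0 \<in> H \<inter> K"
    using hyperplane_in_subspace[OF H] hyperplane_in_subspace[OF K] vec.subspace_0 by blast
  ultimately show ?thesis by auto
qed

lemma ambient_in_intersection_lattice: "W \<in> intersection_lattice W A"
  unfolding intersection_lattice_def by (auto intro: exI[of _ "{}"])

lemma restriction_ambient:
  fixes A :: "('a::field ^ 'n) set set"
  assumes "arrangement W A"
  shows "restriction A W = A"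
proof -
  have "H \<subseteq> W \<and> \<not> W \<subseteq> H" if "H \<in> A" for H
    using assms that by (auto simp: arrangement_def hyperplane_in_def)
  then show ?thesis
    by (auto simp: restriction_def localization_def Int_absorb1)
qed

lemma arrangement_restriction:
  fixes A :: "('a::field ^ 'n) set set"
  assumes A: "arrangement W A" and X: "vec.subspace X" "X \<subseteq> W"
  shows "arrangement X (restriction A X)"
proof -
  have "restriction A X = (\<lambda>H. X \<inter> H) ` (A - localization A X)"
    by (auto simp: restriction_def)
  then have "finite (restriction A X)" using A by (simp add: arrangement_def)
  moreover have "hyperplane_in X (X \<inter> H)" if "H \<in> A" "\<not> X \<subseteq> H" for H
    using that A X dim_Int_hyperplane_in[of W H X] vec.subspace_inter[OF X(1), of H]
    by (auto simp: arrangement_def hyperplane_in_def)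
  ultimately show ?thesis
    using X by (auto simp: arrangement_def restriction_def localization_def)
qed

lemma intersection_lattice_subspace:
  fixes A :: "('a::field ^ 'n) set set"
  assumes "arrangement W A" "X \<in> intersection_lattice W A"
  shows "vec.subspace X" "X \<subseteq> W"
proof -
  obtain B where "B \<subseteq> A" "X = W \<inter> \<Inter>B"
    using assms(2) by (auto simp: intersection_lattice_def)
  moreover have "vec.subspace (\<Inter>B)" if "B \<subseteq> A" for B
    using that assms(1) vec.subspace_Inter[of B] by (auto simp: arrangement_def hyperplane_in_def)
  ultimately show "vec.subspace X" "X \<subseteq> W"
    using assms(1) vec.subspace_inter by (auto simp: arrangement_def)
qed

lemma dim_less_if_intersection_lattice:
  fixes A :: "('a::field ^ 'n) set set"
  assumes "arrangement W A" "X \<in> intersection_lattice W A" "X \<noteq> W"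
  shows "vec.dim X < vec.dim W"
proof -
  obtain B where B: "B \<subseteq> A" "X = W \<inter> \<Inter>B"
    using assms(2) by (auto simp: intersection_lattice_def)
  then obtain H where "H \<in> B" using assms(3) by auto
  then have "vec.dim X \<le> vec.dim H" using B by (intro vec.dim_subset) auto
  moreover have "vec.dim H + 1 = vec.dim W"
    using assms(1) B \<open>H \<in> B\<close> by (auto simp: arrangement_def hyperplane_in_def)
  ultimately show ?thesis by simp
qed

lemma is_partition_two_blocks: "R \<noteq> {} \<Longrightarrow> L \<notin> R \<Longrightarrow> is_partition (insert L R) [R, {L}]"
  by (auto simp: is_partition_def less_Suc_eq)

lemma nice_partition_empty: "nice_partition W {} []"
  by (simp add: nice_partition_def is_partition_def independent_partition_def codim_in_def
      intersection_lattice_def)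

lemma nice_partition_singleton:
  fixes W L :: "('a::field ^ 'n) set"
  assumes L: "hyperplane_in W L"
  shows "nice_partition W {L} [{L}]"
proof -
  have "L \<subseteq> W" "vec.dim L + 1 = vec.dim W" using L by (auto simp: hyperplane_in_def)
  then have "L \<noteq> W" by auto
  have "independent_partition W [{L}]"
    unfolding independent_partition_def
  proof (intro allI impI)
    fix f :: "nat \<Rightarrow> _" assume "\<forall>i<length [{L}]. f i \<in> [{L}] ! i"
    then have "{f i |i. i < length [{L}]} = {L}" by auto
    then show "codim_in W (W \<inter> \<Inter> {f i |i. i < length [{L}]}) = length [{L}]"
      using \<open>L \<subseteq> W\<close> \<open>vec.dim L + 1 = vec.dim W\<close> by (simp add: codim_in_def Int_absorb1)
  qed
  moreover have "intersection_lattice W {L} - {W} = {L}"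
    using \<open>L \<subseteq> W\<close> \<open>L \<noteq> W\<close> by (auto simp: intersection_lattice_def Int_absorb1 subset_singleton_iff)
  ultimately show ?thesis
    by (simp add: nice_partition_def is_partition_def localization_def)
qed

lemma nice_partition_two_blocks:
  fixes W L :: "('a::field ^ 'n) set"
  assumes W: "vec.subspace W" "vec.dim W = 2" and L: "hyperplane_in W L"
    and R: "\<forall>H\<in>R. hyperplane_in W H" "R \<noteq> {}" "L \<notin> R"
  shows "nice_partition W (insert L R) [R, {L}]"
proof -
  have meet_L: "H \<inter> L = {0}" if "H \<in> R" for H
    using hyperplane_in_Int_eq_zero[OF W _ L] that R by auto
  have "independent_partition W [R, {L}]"
    unfolding independent_partition_def
  proof (intro allI impI)
    fix f :: "nat \<Rightarrow> _" assume "\<forall>i<length [R, {L}]. f i \<in> [R, {L}] ! i"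
    then have "f 0 \<in> R" "f 1 = L" by (auto dest: spec[of _ 0] spec[of _ 1])
    moreover have "{f i |i. i < length [R, {L}]} = {f 0, f 1}" by (auto simp: less_Suc_eq)
    ultimately have "W \<inter> \<Inter> {f i |i. i < length [R, {L}]} = {0}"
      using meet_L W(1) vec.subspace_0 by auto
    then show "codim_in W (W \<inter> \<Inter> {f i |i. i < length [R, {L}]}) = length [R, {L}]"
      using W by (simp add: codim_in_def)
  qed
  moreover have "\<exists>i<length [R, {L}]. card ([R, {L}] ! i \<inter> localization (insert L R) X) = 1"
    if X: "X \<in> intersection_lattice W (insert L R) - {W}" for X
  proof (cases "X \<subseteq> L")
    case True
    then have "[R, {L}] ! 1 \<inter> localization (insert L R) X = {L}" by (auto simp: localization_def)
    then show ?thesis by (intro exI[of _ 1]) auto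
  next
    case False
    obtain B where B: "B \<subseteq> insert L R" "X = W \<inter> \<Inter>B" "X \<noteq> W"
      using X by (auto simp: intersection_lattice_def)
    then obtain H where "H \<in> B" by auto
    then have "X \<subseteq> H" "H \<in> R" using B False by auto
    have "R \<inter> localization (insert L R) X = {H}"
    proof -
      have "K = H" if "K \<in> R" "X \<subseteq> K" for K
      proof (rule ccontr)
        assume "K \<noteq> H"
        then have "H \<inter> K = {0}"
          using hyperplane_in_Int_eq_zero[OF W, of H K] R(1) \<open>H \<in> R\<close> \<open>K \<in> R\<close> by simp
        then have "X \<subseteq> {0}" using \<open>X \<subseteq> H\<close> \<open>X \<subseteq> K\<close> by blast
        moreover have "0 \<in> L" using vec.subspace_0[OF hyperplane_in_subspace[OF L]] .
        ultimately show False using False by blast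
      qed
      then show ?thesis unfolding localization_def using \<open>X \<subseteq> H\<close> \<open>H \<in> R\<close> by blast
    qed
    then show ?thesis by (intro exI[of _ 0]) auto
  qed
  ultimately show ?thesis
    using is_partition_two_blocks[OF R(2,3)] by (simp add: nice_partition_def)
qed

lemma ind_factored_pair_singleton:
  fixes W L :: "('a::field ^ 'n) set"
  assumes W: "vec.subspace W" and L: "hyperplane_in W L"
  shows "ind_factored_pair W {L} [{L}]"
proof (rule ind_factored_pair.step)
  have "restriction {L} L = {}" by (auto simp: restriction_def localization_def)
  then show "bij_betw (\<lambda>H. H \<inter> L) ({L} - hd [{L}]) (restriction {L} L)"
    and "ind_factored_pair L (restriction {L} L) (map ((`) (\<lambda>H. H \<inter> L)) (tl [{L}]))"
    using hyperplane_in_subspace[OF L] by (simp_all add: bij_betw_def ind_factored_pair.empty)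
qed (use W L in \<open>simp_all add: arrangement_def is_partition_def ind_factored_pair.empty\<close>)

lemma ind_factored_pair_two_blocks:
  fixes W L :: "('a::field ^ 'n) set"
  assumes W: "vec.subspace W" "vec.dim W = 2" and L: "hyperplane_in W L"
    and R: "finite R" "\<forall>H\<in>R. hyperplane_in W H" "R \<noteq> {}" "L \<notin> R"
  shows "ind_factored_pair W (insert L R) [R, {L}]"
  using R
proof (induction R rule: finite_induct)
  case empty
  then show ?case by simp
next
  case (insert H0 F)
  let ?A = "insert L (insert H0 F)"
  have H0: "hyperplane_in W H0" and "H0 \<noteq> L" "L \<notin> F" using insert.prems by auto
  have meet: "H0 \<inter> K = {0}" if "K \<in> ?A" "K \<noteq> H0" for K
    using hyperplane_in_Int_eq_zero[OF W H0, of K] that insert.prems L by auto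
  have "localization ?A H0 = {H0}"
    using hyperplane_in_eq_if_subset[OF H0] L insert.prems by (auto simp: localization_def)
  then have "restriction ?A H0 = (\<lambda>K. H0 \<inter> K) ` (?A - {H0})"
    by (auto simp: restriction_def)
  also have "\<dots> = {{0}}"
    using meet \<open>H0 \<noteq> L\<close> by (auto intro!: rev_image_eqI[of L])
  finally have restr: "restriction ?A H0 = {{0}}" .
  have ind_deletion: "ind_factored_pair W (insert L F) (if F = {} then [{L}] else [F, {L}])"
    using ind_factored_pair_singleton[OF W(1) L] insert.IH insert.prems by simp
  have "vec.subspace H0" "vec.dim H0 = 1" using H0 W by (auto simp: hyperplane_in_def)
  then have ind_restriction: "ind_factored_pair H0 {{0}} [{{0}}]"
    by (intro ind_factored_pair_singleton hyperplane_in_zero)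
  show ?case
  proof (rule ind_factored_pair.step[of W ?A _ H0])
    show "arrangement W ?A" using W insert L by (simp add: arrangement_def)
    show "is_partition ?A [insert H0 F, {L}]"
      using \<open>H0 \<noteq> L\<close> \<open>L \<notin> F\<close> by (intro is_partition_two_blocks) auto
    have "?A - hd [insert H0 F, {L}] = {L}" using \<open>H0 \<noteq> L\<close> \<open>L \<notin> F\<close> by auto
    then show "bij_betw (\<lambda>H. H \<inter> H0) (?A - hd [insert H0 F, {L}]) (restriction ?A H0)"
      using restr meet[of L] \<open>H0 \<noteq> L\<close> by (simp add: Int_commute)
    have "?A - {H0} = insert L F" using insert.hyps \<open>H0 \<noteq> L\<close> by auto
    moreover have "filter (\<lambda>b. b \<noteq> {}) (map (\<lambda>b. b - {H0}) [insert H0 F, {L}])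
        = (if F = {} then [{L}] else [F, {L}])"
      using insert.hyps \<open>H0 \<noteq> L\<close> by auto
    ultimately show "ind_factored_pair W (?A - {H0})
        (filter (\<lambda>b. b \<noteq> {}) (map (\<lambda>b. b - {H0}) [insert H0 F, {L}]))"
      using ind_deletion by simp
    show "ind_factored_pair H0 (restriction ?A H0) (map ((`) (\<lambda>H. H \<inter> H0)) (tl [insert H0 F, {L}]))"
      using ind_restriction restr meet[of L] \<open>H0 \<noteq> L\<close> by (simp add: Int_commute)
  qed simp_all
qed

lemma arrangement_dim_le_2_cases:
  fixes A :: "('a::field ^ 'n) set set"
  assumes A: "arrangement W A" and dim: "vec.dim W \<le> 2"
  obtains "A = {}"
  | L where "hyperplane_in W L" "A = {L}"
  | L R where "vec.dim W = 2" "hyperplane_in W L" "finite R" "\<forall>H\<in>R. hyperplane_in W H"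
      "R \<noteq> {}" "L \<notin> R" "A = insert L R"
proof (cases "A = {}")
  case False
  then obtain L where "L \<in> A" by auto
  have hyp: "hyperplane_in W H" if "H \<in> A" for H using A that by (simp add: arrangement_def)
  show thesis
  proof (cases "A - {L} = {}")
    case True
    then show thesis using that(2) hyp \<open>L \<in> A\<close> by auto
  next
    case False
    then obtain K where "K \<in> A" "K \<noteq> L" by auto
    have "vec.dim W = 2"
    proof (rule ccontr)
      assume "vec.dim W \<noteq> 2"
      then have "vec.dim W = 1" using dim hyp[OF \<open>L \<in> A\<close>] by (auto simp: hyperplane_in_def)
      then have "H = {0}" if "H \<in> A" for H
        using hyp[OF that] vec.subspace_0 by (auto simp: hyperplane_in_def)
      then show False using \<open>K \<in> A\<close> \<open>L \<in> A\<close> \<open>K \<noteq> L\<close> by blast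
    qed
    then show thesis
      using that(3)[of L "A - {L}"] A hyp \<open>L \<in> A\<close> False by (auto simp: arrangement_def)
  qed
qed

lemma factored_if_dim_le_2:
  fixes A :: "('a::field ^ 'n) set set"
  assumes "arrangement W A" "vec.dim W \<le> 2"
  shows "factored W A"
  using assms
proof (cases rule: arrangement_dim_le_2_cases)
  case 1
  then show ?thesis using nice_partition_empty by (auto simp: factored_def)
next
  case (2 L)
  then show ?thesis using nice_partition_singleton by (auto simp: factored_def)
next
  case (3 L R)
  then show ?thesis
    using assms nice_partition_two_blocks[of W L R] by (auto simp: factored_def arrangement_def)
qed

lemma ind_factored_if_dim_le_2:
  fixes A :: "('a::field ^ 'n) set set"
  assumes "arrangement W A" "vec.dim W \<le> 2"
  shows "ind_factored W A"
proof -
  have W: "vec.subspace W" using assms by (simp add: arrangement_def)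
  show ?thesis
    using assms
  proof (cases rule: arrangement_dim_le_2_cases)
    case 1
    then show ?thesis using ind_factored_pair.empty[OF W] by (auto simp: ind_factored_def)
  next
    case (2 L)
    then show ?thesis using ind_factored_pair_singleton[OF W] by (auto simp: ind_factored_def)
  next
    case (3 L R)
    then show ?thesis
      using ind_factored_pair_two_blocks[OF W] by (auto simp: ind_factored_def)
  qed
qed

lemma hered_factored_iff_factored:
  fixes A :: "('a::field ^ 'n) set set"
  assumes "arrangement W A"
    and "\<And>X. X \<in> intersection_lattice W A \<Longrightarrow> X \<noteq> W \<Longrightarrow> factored X (restriction A X)"
  shows "hered_factored W A \<longleftrightarrow> factored W A"
  using assms ambient_in_intersection_lattice restriction_ambient
  unfolding hered_factored_def by metis

lemma hered_ind_factored_iff_ind_factored: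
  fixes A :: "('a::field ^ 'n) set set"
  assumes "arrangement W A"
    and "\<And>X. X \<in> intersection_lattice W A \<Longrightarrow> X \<noteq> W \<Longrightarrow> ind_factored X (restriction A X)"
  shows "hered_ind_factored W A \<longleftrightarrow> ind_factored W A"
  using assms ambient_in_intersection_lattice restriction_ambient
  unfolding hered_ind_factored_def by metis

theorem lemma3p26:
  fixes A :: "('a::field ^ 3) set set"
  assumes "arrangement UNIV A"
  shows "(factored UNIV A \<longleftrightarrow> hered_factored UNIV A) \<and>
         (ind_factored UNIV A \<longleftrightarrow> hered_ind_factored UNIV A)"
proof -
  have proper_restriction: "arrangement X (restriction A X) \<and> vec.dim X \<le> 2"
    if "X \<in> intersection_lattice UNIV A" "X \<noteq> UNIV" for X
  proof -
    have "vec.dim (UNIV :: ('a ^ 3) set) = 3" using vec_dim_card[where 'a='a and 'n=3] by simp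
    then have "vec.dim X \<le> 2"
      using dim_less_if_intersection_lattice[OF assms that] by simp
    moreover have "arrangement X (restriction A X)"
      using arrangement_restriction[OF assms] intersection_lattice_subspace[OF assms that(1)] by blast
    ultimately show ?thesis by blast
  qed
  show ?thesis
    using hered_factored_iff_factored[OF assms] hered_ind_factored_iff_ind_factored[OF assms]
      proper_restriction factored_if_dim_le_2 ind_factored_if_dim_le_2 by metis
qed

end
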